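(* For any positive integer $n$, $\chi_{ld}(F_n+B_{n,n})=2n+5$.
   Context: All graphs are finite, simple and undirected. For a graph $G=(V,E)$ of order $N$ without isolated vertices, a bijection $f\colon V\to\{1,2,\dots,N\}$ is a local distance antimagic labeling if $w(u)\neq w(v)$ for every edge $uv$, where $w(u)=\sum_{x\in N(u)}f(x)$ and $N(u)$ is the open neighborhood of $u$. $\chi_{ld}(G)$ is the minimum number of distinct values of $w$ over all local distance antimagic labelings of $G$. The friendship graph $F_n$ consists of $n$ triangles sharing one common vertex. The bistar $B_{n,n}$ has vertices $a,b,x_1,\dots,x_n,y_1,\dots,y_n$ with edges $ab$, $ax_i$ and $by_i$ ($1\le i\le n$). $G+H$ is the join: the disjoint union of $G$ and $H$ plus all edges between $V(G)$ and $V(H)$. *)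

theory Defs
  imports Main
begin

text \<open>A finite simple graph is represented as a pair (vertex set, edge set), where every
edge is a two-element set of vertices.\<close>

type_synonym 'a graph = "'a set \<times> 'a set set"

definition verts :: "'a graph \<Rightarrow> 'a set" where "verts G = fst G"
definition edges :: "'a graph \<Rightarrow> 'a set set" where "edges G = snd G"

definition nbhd :: "'a graph \<Rightarrow> 'a \<Rightarrow> 'a set" where
  "nbhd G u = {x \<in> verts G. x \<noteq> u \<and> {u, x} \<in> edges G}"

definition weight :: "'a graph \<Rightarrow> ('a \<Rightarrow> nat) \<Rightarrow> 'a \<Rightarrow> nat" where
  "weight G f u = (\<Sum>x\<in>nbhd G u. f x)"

definition ld_antimagic :: "'a graph \<Rightarrow> ('a \<Rightarrow> nat) \<Rightarrow> bool" where
  "ld_antimagic G f \<longleftrightarrow>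
     bij_betw f (verts G) {1..card (verts G)} \<and>
     (\<forall>u v. u \<noteq> v \<and> {u, v} \<in> edges G \<longrightarrow> weight G f u \<noteq> weight G f v)"

definition chi_ld :: "'a graph \<Rightarrow> nat" where
  "chi_ld G = Min {card (weight G f ` verts G) | f. ld_antimagic G f}"

definition graph_join :: "'a graph \<Rightarrow> 'b graph \<Rightarrow> ('a + 'b) graph" where
  "graph_join G H =
    (Inl ` verts G \<union> Inr ` verts H,
     (image Inl) ` edges G \<union> (image Inr) ` edges H \<union>
     {{Inl u, Inr v} | u v. u \<in> verts G \<and> v \<in> verts H})"

definition friendship :: "nat \<Rightarrow> nat graph" where
  "friendship n =
    ({0..2*n},
     (\<Union>i\<in>{1..n}. {{0, 2*i-1}, {0, 2*i}, {2*i-1, 2*i}}))"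

text \<open>Bistar B_{n,n}: a = 0, b = 1, x_i = i+1, y_i = n+1+i (1 \<le> i \<le> n).\<close>
definition bistar :: "nat \<Rightarrow> nat graph" where
  "bistar n =
    ({0..2*n+1},
     {{0, 1}} \<union> (\<Union>i\<in>{1..n}. {{0, i+1}, {1, n+1+i}}))"

end

theory Submission
  imports Defs
begin

text \<open>In a join every vertex of one side is adjacent to every vertex of the other, so the two
sides carry disjoint sets of weights; on each side the weight of a vertex is its weight in the side
graph under the restricted labelling, shifted by the label sum of the other side. In F_n all 2n + 1
weights are distinct: the centre is adjacent to every leaf, and two non-adjacent leaves have weights
f(centre) + f(partner) with different partners. In B_{n,n} exactly four weights occur: the leaves at
a all get f(a), those at b get f(b), and w(a) > f(b), w(b) > f(a) together with the edges ab, ax_1,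
by_1 separate the four values. Hence every local distance antimagic labelling has exactly 2n + 5
weights, and an explicit labelling shows that one exists.\<close>

definition finite_graph :: "'a graph \<Rightarrow> bool" where
  "finite_graph G \<longleftrightarrow> finite (verts G) \<and> (\<forall>e\<in>edges G. e \<subseteq> verts G)"

definition proper_weights :: "'a graph \<Rightarrow> ('a \<Rightarrow> nat) \<Rightarrow> bool" where
  "proper_weights G f \<longleftrightarrow>
     (\<forall>u v. u \<noteq> v \<and> {u, v} \<in> edges G \<longrightarrow> weight G f u \<noteq> weight G f v)"

lemma ld_antimagic_iff:
  "ld_antimagic G f \<longleftrightarrow> bij_betw f (verts G) {1..card (verts G)} \<and> proper_weights G f"
  unfolding ld_antimagic_def proper_weights_def ..

lemma chi_ld_eqI:
  assumes "ld_antimagic G f" and "\<And>f. ld_antimagic G f \<Longrightarrow> card (weight G f ` verts G) = k"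
  shows "chi_ld G = k"
proof -
  have "{card (weight G f ` verts G) | f. ld_antimagic G f} = {k}"
    using assms by blast
  then show ?thesis by (simp add: chi_ld_def)
qed

section \<open>Joins\<close>

lemma verts_graph_join: "verts (graph_join G H) = Inl ` verts G \<union> Inr ` verts H"
  by (simp add: graph_join_def verts_def)

lemma edges_graph_join:
  "edges (graph_join G H) = image Inl ` edges G \<union> image Inr ` edges H \<union>
     {{Inl u, Inr v} | u v. u \<in> verts G \<and> v \<in> verts H}"
  by (simp add: graph_join_def edges_def)

lemma edge_graph_join_Inl_Inl: "{Inl u, Inl v} \<in> edges (graph_join G H) \<longleftrightarrow> {u, v} \<in> edges G"
proof -
  have "{Inl u, Inl v} \<in> image Inl ` edges G \<longleftrightarrow> {u, v} \<in> edges G"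
    using inj_image_mem_iff[OF inj_on_image[of Inl UNIV], of "{u, v}"] by simp
  moreover have "{Inl u, Inl v} \<notin> image Inr ` edges H"
    by auto
  moreover have "{Inl u, Inl v} \<noteq> {Inl a, Inr b}" for a :: 'a and b :: 'b
    by (auto simp: doubleton_eq_iff)
  ultimately show ?thesis unfolding edges_graph_join by blast
qed

lemma edge_graph_join_Inr_Inr: "{Inr u, Inr v} \<in> edges (graph_join G H) \<longleftrightarrow> {u, v} \<in> edges H"
proof -
  have "{Inr u, Inr v} \<in> image Inr ` edges H \<longleftrightarrow> {u, v} \<in> edges H"
    using inj_image_mem_iff[OF inj_on_image[of Inr UNIV], of "{u, v}"] by simp
  moreover have "{Inr u, Inr v} \<notin> image Inl ` edges G"
    by auto
  moreover have "{Inr u, Inr v} \<noteq> {Inl a, Inr b}" for a :: 'a and b :: 'b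
    by (auto simp: doubleton_eq_iff)
  ultimately show ?thesis unfolding edges_graph_join by blast
qed

lemma edge_graph_join_Inl_Inr:
  "{Inl u, Inr v} \<in> edges (graph_join G H) \<longleftrightarrow> u \<in> verts G \<and> v \<in> verts H"
proof -
  have "{Inl u, Inr v} \<notin> image Inl ` edges G" "{Inl u, Inr v} \<notin> image Inr ` edges H"
    by blast+
  moreover have "{Inl u, Inr v} = {Inl a, Inr b} \<longleftrightarrow> a = u \<and> b = v" for a b
    by (simp add: doubleton_eq_iff) blast
  ultimately show ?thesis unfolding edges_graph_join by simp
qed

lemma edge_graph_join_Inr_Inl:
  "{Inr v, Inl u} \<in> edges (graph_join G H) \<longleftrightarrow> u \<in> verts G \<and> v \<in> verts H"
  by (metis edge_graph_join_Inl_Inr insert_commute)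

lemma nbhd_graph_join_Inl:
  assumes "u \<in> verts G"
  shows "nbhd (graph_join G H) (Inl u) = Inl ` nbhd G u \<union> Inr ` verts H"
proof (rule set_eqI)
  fix x
  show "x \<in> nbhd (graph_join G H) (Inl u) \<longleftrightarrow> x \<in> Inl ` nbhd G u \<union> Inr ` verts H"
    using assms
    by (cases x) (auto simp: nbhd_def verts_graph_join edge_graph_join_Inl_Inl edge_graph_join_Inl_Inr)
qed

lemma nbhd_graph_join_Inr:
  assumes "v \<in> verts H"
  shows "nbhd (graph_join G H) (Inr v) = Inl ` verts G \<union> Inr ` nbhd H v"
proof (rule set_eqI)
  fix x
  show "x \<in> nbhd (graph_join G H) (Inr v) \<longleftrightarrow> x \<in> Inl ` verts G \<union> Inr ` nbhd H v"
    using assms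
    by (cases x) (auto simp: nbhd_def verts_graph_join edge_graph_join_Inr_Inr edge_graph_join_Inr_Inl)
qed

lemma weight_graph_join_Inl:
  assumes "finite (verts G)" "finite (verts H)" "u \<in> verts G"
  shows "weight (graph_join G H) f (Inl u) = weight G (f \<circ> Inl) u + (\<Sum>v\<in>verts H. f (Inr v))"
proof -
  have "finite (nbhd G u)" using assms(1) by (simp add: nbhd_def)
  then show ?thesis
    using assms unfolding weight_def nbhd_graph_join_Inl[OF assms(3)]
    by (subst sum.union_disjoint) (auto simp: sum.reindex)
qed

lemma weight_graph_join_Inr:
  assumes "finite (verts G)" "finite (verts H)" "v \<in> verts H"
  shows "weight (graph_join G H) f (Inr v) = (\<Sum>u\<in>verts G. f (Inl u)) + weight H (f \<circ> Inr) v"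
proof -
  have "finite (nbhd H v)" using assms(2) by (simp add: nbhd_def)
  then show ?thesis
    using assms unfolding weight_def nbhd_graph_join_Inr[OF assms(3)]
    by (subst sum.union_disjoint) (auto simp: sum.reindex)
qed

lemma card_verts_graph_join:
  assumes "finite (verts G)" "finite (verts H)"
  shows "card (verts (graph_join G H)) = card (verts G) + card (verts H)"
  using card_Plus[OF assms] by (simp add: verts_graph_join Plus_def)

lemma finite_graph_edge_in_verts:
  assumes "finite_graph G" "{u, v} \<in> edges G"
  shows "u \<in> verts G" "v \<in> verts G"
  using assms by (auto simp: finite_graph_def)

lemma proper_weights_graph_join_iff:
  assumes G: "finite_graph G" and H: "finite_graph H"
  shows "proper_weights (graph_join G H) f \<longleftrightarrow>
    proper_weights G (f \<circ> Inl) \<and> proper_weights H (f \<circ> Inr) \<and>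
    (\<forall>u\<in>verts G. \<forall>v\<in>verts H. weight (graph_join G H) f (Inl u) \<noteq> weight (graph_join G H) f (Inr v))"
proof -
  let ?w = "weight (graph_join G H) f"
  have fin: "finite (verts G)" "finite (verts H)"
    using G H by (simp_all add: finite_graph_def)
  have all_sum: "(\<forall>x. P x) \<longleftrightarrow> (\<forall>u. P (Inl u)) \<and> (\<forall>v. P (Inr v))" for P :: "'a + 'b \<Rightarrow> bool"
    by (metis sum.exhaust)
  have "?w (Inl u) = ?w (Inl v) \<longleftrightarrow> weight G (f \<circ> Inl) u = weight G (f \<circ> Inl) v"
    if "{u, v} \<in> edges G" for u v
    using weight_graph_join_Inl[OF fin] finite_graph_edge_in_verts[OF G that] by simp
  then have "proper_weights G (f \<circ> Inl) \<longleftrightarrow>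
      (\<forall>u v. u \<noteq> v \<and> {u, v} \<in> edges G \<longrightarrow> ?w (Inl u) \<noteq> ?w (Inl v))"
    unfolding proper_weights_def by blast
  moreover have "?w (Inr u) = ?w (Inr v) \<longleftrightarrow> weight H (f \<circ> Inr) u = weight H (f \<circ> Inr) v"
    if "{u, v} \<in> edges H" for u v
    using weight_graph_join_Inr[OF fin] finite_graph_edge_in_verts[OF H that] by simp
  then have "proper_weights H (f \<circ> Inr) \<longleftrightarrow>
      (\<forall>u v. u \<noteq> v \<and> {u, v} \<in> edges H \<longrightarrow> ?w (Inr u) \<noteq> ?w (Inr v))"
    unfolding proper_weights_def by blast
  ultimately show ?thesis
    unfolding proper_weights_def[of "graph_join G H"] all_sum
    by (auto simp: edge_graph_join_Inl_Inl edge_graph_join_Inr_Inr edge_graph_join_Inl_Inr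
        edge_graph_join_Inr_Inl) metis
qed

lemma card_weight_image_graph_join:
  assumes G: "finite_graph G" and H: "finite_graph H"
    and proper: "proper_weights (graph_join G H) f"
  shows "card (weight (graph_join G H) f ` verts (graph_join G H)) =
    card (weight G (f \<circ> Inl) ` verts G) + card (weight H (f \<circ> Inr) ` verts H)"
proof -
  let ?w = "weight (graph_join G H) f"
  have fin: "finite (verts G)" "finite (verts H)"
    using G H by (simp_all add: finite_graph_def)
  have "?w ` Inl ` verts G = (\<lambda>a. a + (\<Sum>y\<in>verts H. f (Inr y))) ` weight G (f \<circ> Inl) ` verts G"
    "?w ` Inr ` verts H = (\<lambda>a. (\<Sum>x\<in>verts G. f (Inl x)) + a) ` weight H (f \<circ> Inr) ` verts H"
    unfolding image_image using weight_graph_join_Inl[OF fin] weight_graph_join_Inr[OF fin] by simp_all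
  moreover have "?w ` Inl ` verts G \<inter> ?w ` Inr ` verts H = {}"
    using proper unfolding proper_weights_graph_join_iff[OF G H] by blast
  ultimately show ?thesis
    unfolding verts_graph_join image_Un using fin by (simp add: card_Un_disjoint card_image)
qed

section \<open>The friendship graph\<close>

definition friendship_partner :: "nat \<Rightarrow> nat" where
  "friendship_partner q = (if odd q then q + 1 else q - 1)"

lemma friendship_partner_involution:
  assumes "q \<in> {1..2*n}"
  shows "friendship_partner q \<in> {1..2*n}" "friendship_partner q \<noteq> q"
    "friendship_partner (friendship_partner q) = q"
  using assms unfolding friendship_partner_def by auto presburger+

lemma edges_friendship:
  "edges (friendship n) = (\<lambda>q. {0, q}) ` {1..2*n} \<union> (\<lambda>q. {q, friendship_partner q}) ` {1..2*n}"
proof (rule set_eqI)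
  fix e
  have "e \<in> edges (friendship n) \<longleftrightarrow> (\<exists>i\<in>{1..n}. e = {0, 2*i-1} \<or> e = {0, 2*i} \<or> e = {2*i-1, 2*i})"
    by (auto simp: edges_def friendship_def)
  also have "\<dots> \<longleftrightarrow> (\<exists>q\<in>{1..2*n}. e = {0, q} \<or> e = {q, friendship_partner q})"
  proof
    assume "\<exists>i\<in>{1..n}. e = {0, 2*i-1} \<or> e = {0, 2*i} \<or> e = {2*i-1, 2*i}"
    then obtain i where "i \<in> {1..n}" "e = {0, 2*i-1} \<or> e = {0, 2*i} \<or> e = {2*i-1, 2*i}" by blast
    moreover have "friendship_partner (2*i-1) = 2*i"
      using \<open>i \<in> {1..n}\<close> by (auto simp: friendship_partner_def)
    moreover have "2*i-1 \<in> {1..2*n}" "2*i \<in> {1..2*n}" using \<open>i \<in> {1..n}\<close> by auto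
    ultimately show "\<exists>q\<in>{1..2*n}. e = {0, q} \<or> e = {q, friendship_partner q}"
      by metis
  next
    assume "\<exists>q\<in>{1..2*n}. e = {0, q} \<or> e = {q, friendship_partner q}"
    then obtain q where q: "q \<in> {1..2*n}" "e = {0, q} \<or> e = {q, friendship_partner q}" by blast
    define i where "i = (q + 1) div 2"
    have i: "i \<in> {1..n}" using q(1) unfolding i_def by auto
    have "q = 2*i-1 \<and> friendship_partner q = 2*i \<or> q = 2*i \<and> friendship_partner q = 2*i-1"
      using q(1) unfolding i_def friendship_partner_def by auto
    then show "\<exists>i\<in>{1..n}. e = {0, 2*i-1} \<or> e = {0, 2*i} \<or> e = {2*i-1, 2*i}"
      using i q(2) by (metis insert_commute)
  qed
  finally show "e \<in> edges (friendship n) \<longleftrightarrow> e \<in> (\<lambda>q. {0, q}) ` {1..2*n} \<union> (\<lambda>q. {q, friendship_partner q}) ` {1..2*n}"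
    by blast
qed

lemma verts_friendship: "verts (friendship n) = {0..2*n}"
  by (simp add: verts_def friendship_def)

lemma edge_friendship_iff:
  "{u, v} \<in> edges (friendship n) \<longleftrightarrow>
     u = 0 \<and> v \<in> {1..2*n} \<or> v = 0 \<and> u \<in> {1..2*n} \<or> u \<in> {1..2*n} \<and> v = friendship_partner u"
proof
  assume "{u, v} \<in> edges (friendship n)"
  then obtain q where q: "q \<in> {1..2*n}" "{u, v} = {0, q} \<or> {u, v} = {q, friendship_partner q}"
    unfolding edges_friendship by blast
  then show "u = 0 \<and> v \<in> {1..2*n} \<or> v = 0 \<and> u \<in> {1..2*n} \<or> u \<in> {1..2*n} \<and> v = friendship_partner u"
    using friendship_partner_involution[OF q(1)] by (auto simp: doubleton_eq_iff)
next
  assume "u = 0 \<and> v \<in> {1..2*n} \<or> v = 0 \<and> u \<in> {1..2*n} \<or> u \<in> {1..2*n} \<and> v = friendship_partner u"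
  then show "{u, v} \<in> edges (friendship n)"
    unfolding edges_friendship by (auto simp: insert_commute)
qed

lemma finite_graph_friendship: "finite_graph (friendship n)"
  using friendship_partner_involution
  by (auto simp: finite_graph_def edges_friendship verts_friendship)

lemma nbhd_friendship_centre: "nbhd (friendship n) 0 = {1..2*n}"
  by (auto simp: nbhd_def edge_friendship_iff verts_friendship)

lemma nbhd_friendship_leaf:
  assumes "q \<in> {1..2*n}"
  shows "nbhd (friendship n) q = {0, friendship_partner q}"
  using assms friendship_partner_involution[OF assms]
  by (auto simp: nbhd_def edge_friendship_iff verts_friendship)

lemma weight_friendship_centre: "weight (friendship n) g 0 = (\<Sum>q\<in>{1..2*n}. g q)"
  by (simp add: weight_def nbhd_friendship_centre)

lemma weight_friendship_leaf:
  assumes "q \<in> {1..2*n}"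
  shows "weight (friendship n) g q = g 0 + g (friendship_partner q)"
  using friendship_partner_involution(1)[OF assms]
  by (simp add: weight_def nbhd_friendship_leaf[OF assms])

lemma proper_weights_friendship_iff:
  "proper_weights (friendship n) g \<longleftrightarrow>
     (\<forall>q\<in>{1..2*n}. weight (friendship n) g 0 \<noteq> weight (friendship n) g q \<and>
        weight (friendship n) g q \<noteq> weight (friendship n) g (friendship_partner q))"
  unfolding proper_weights_def edge_friendship_iff
  using friendship_partner_involution by fastforce

lemma card_weight_image_friendship:
  assumes inj: "inj_on g (verts (friendship n))" and proper: "proper_weights (friendship n) g"
  shows "card (weight (friendship n) g ` verts (friendship n)) = 2*n + 1"
proof -
  let ?w = "weight (friendship n) g"
  have "?w p \<noteq> ?w q" if "p \<in> {1..2*n}" "q \<in> {1..2*n}" "p \<noteq> q" for p q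
  proof (cases "q = friendship_partner p")
    case True
    then show ?thesis using proper that(1) unfolding proper_weights_friendship_iff by blast
  next
    case False
    then have "friendship_partner p \<noteq> friendship_partner q"
      using friendship_partner_involution that by metis
    then have "g (friendship_partner p) \<noteq> g (friendship_partner q)"
      using inj friendship_partner_involution(1) that unfolding verts_friendship
      by (metis atLeastAtMost_iff inj_on_def le0)
    then show ?thesis using weight_friendship_leaf that by simp
  qed
  moreover have "?w 0 \<noteq> ?w q" if "q \<in> {1..2*n}" for q
    using proper that unfolding proper_weights_friendship_iff by blast
  ultimately have "inj_on ?w {0..2*n}"
    by (intro inj_onI) (metis atLeastAtMost_iff less_one not_less)
  then show ?thesis by (simp add: card_image verts_friendship)
qed

section \<open>The bistar\<close>

lemma verts_bistar: "verts (bistar n) = {0..2*n+1}"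
  by (simp add: verts_def bistar_def)

lemma edges_bistar:
  "edges (bistar n) = insert {0, 1} ((\<lambda>j. {0, j}) ` {2..n+1} \<union> (\<lambda>j. {1, j}) ` {n+2..2*n+1})"
proof -
  have "(\<lambda>i. {0, i+1}) ` {1..n} = (\<lambda>j. {0, j}) ` ((\<lambda>i. i + 1) ` {1..n})"
    "(\<lambda>i. {1, n+1+i}) ` {1..n} = (\<lambda>j. {1, j}) ` (plus (n+1) ` {1..n})"
    by (simp_all only: image_image)
  moreover have "(\<lambda>i. i + 1) ` {1..n} = {2..n+1}" "plus (n+1) ` {1..n} = {n+2..2*n+1}"
    unfolding image_add_atLeastAtMost image_add_atLeastAtMost' by simp_all
  moreover have "edges (bistar n) = insert {0, 1} ((\<lambda>i. {0, i+1}) ` {1..n} \<union> (\<lambda>i. {1, n+1+i}) ` {1..n})"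
    unfolding edges_def bistar_def snd_conv by blast
  ultimately show ?thesis by (simp only:)
qed

lemma edge_bistar_iff:
  "{u, v} \<in> edges (bistar n) \<longleftrightarrow>
     {u, v} = {0, 1} \<or> u = 0 \<and> v \<in> {2..n+1} \<or> v = 0 \<and> u \<in> {2..n+1} \<or>
     u = 1 \<and> v \<in> {n+2..2*n+1} \<or> v = 1 \<and> u \<in> {n+2..2*n+1}"
  unfolding edges_bistar insert_iff Un_iff image_iff doubleton_eq_iff by auto

lemma finite_graph_bistar: "finite_graph (bistar n)"
  by (auto simp: finite_graph_def edges_bistar verts_bistar)

lemma nbhd_bistar_0: "nbhd (bistar n) 0 = {1..n+1}"
  by (auto simp: nbhd_def edge_bistar_iff verts_bistar doubleton_eq_iff)

lemma nbhd_bistar_1: "nbhd (bistar n) 1 = insert 0 {n+2..2*n+1}"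
  by (auto simp: nbhd_def edge_bistar_iff verts_bistar doubleton_eq_iff)

lemma nbhd_bistar_leaf_0:
  assumes "j \<in> {2..n+1}"
  shows "nbhd (bistar n) j = {0}"
  using assms by (auto simp: nbhd_def edge_bistar_iff verts_bistar doubleton_eq_iff)

lemma nbhd_bistar_leaf_1:
  assumes "j \<in> {n+2..2*n+1}"
  shows "nbhd (bistar n) j = {1}"
  using assms by (auto simp: nbhd_def edge_bistar_iff verts_bistar doubleton_eq_iff)

lemma weight_bistar_0: "weight (bistar n) g 0 = g 1 + (\<Sum>j\<in>{2..n+1}. g j)"
  by (simp add: weight_def nbhd_bistar_0 sum.atLeast_Suc_atMost numeral_2_eq_2)

lemma weight_bistar_1: "weight (bistar n) g 1 = g 0 + (\<Sum>j\<in>{n+2..2*n+1}. g j)"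
  unfolding weight_def nbhd_bistar_1 by simp

lemma weight_bistar_leaf_0: "j \<in> {2..n+1} \<Longrightarrow> weight (bistar n) g j = g 0"
  by (simp add: weight_def nbhd_bistar_leaf_0)

lemma weight_bistar_leaf_1: "j \<in> {n+2..2*n+1} \<Longrightarrow> weight (bistar n) g j = g 1"
  by (simp add: weight_def nbhd_bistar_leaf_1)

lemma proper_weights_bistar_iff:
  assumes "n \<ge> 1"
  shows "proper_weights (bistar n) g \<longleftrightarrow>
    weight (bistar n) g 0 \<noteq> weight (bistar n) g 1 \<and>
    weight (bistar n) g 0 \<noteq> g 0 \<and> weight (bistar n) g 1 \<noteq> g 1"
proof -
  let ?w = "weight (bistar n) g"
  have "proper_weights (bistar n) g \<longleftrightarrow>
      ?w 0 \<noteq> ?w 1 \<and> (\<forall>j\<in>{2..n+1}. ?w 0 \<noteq> ?w j) \<and> (\<forall>j\<in>{n+2..2*n+1}. ?w 1 \<noteq> ?w j)"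
    unfolding proper_weights_def edge_bistar_iff doubleton_eq_iff by fastforce
  moreover have "{2..n+1} \<noteq> {}" "{n+2..2*n+1} \<noteq> {}" using assms by auto
  ultimately show ?thesis
    using weight_bistar_leaf_0 weight_bistar_leaf_1 by (metis all_not_in_conv)
qed

lemma card_weight_image_bistar:
  assumes n: "n \<ge> 1" and inj: "inj_on g (verts (bistar n))"
    and pos: "0 \<notin> g ` verts (bistar n)" and proper: "proper_weights (bistar n) g"
  shows "card (weight (bistar n) g ` verts (bistar n)) = 4"
proof -
  let ?w = "weight (bistar n) g"
  have "?w ` {2..n+1} = (\<lambda>_. g 0) ` {2..n+1}" "?w ` {n+2..2*n+1} = (\<lambda>_. g 1) ` {n+2..2*n+1}"
    by (intro image_cong refl; simp add: weight_bistar_leaf_0 weight_bistar_leaf_1)+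
  then have leaves: "?w ` {2..n+1} = {g 0}" "?w ` {n+2..2*n+1} = {g 1}"
    using n by (simp_all add: image_constant_conv)
  have V: "verts (bistar n) = {0, 1} \<union> {2..n+1} \<union> {n+2..2*n+1}"
    by (auto simp: verts_bistar)
  have img: "?w ` verts (bistar n) = {?w 0, ?w 1, g 0, g 1}"
    unfolding V image_Un leaves by auto
  have g_pos: "g j > 0" if "j \<le> 2*n+1" for j
    using pos that by (auto simp: verts_bistar)
  have "g 0 \<noteq> g 1"
    using inj unfolding inj_on_def verts_bistar by force
  moreover have "?w 0 > g 1"
  proof -
    have "(\<Sum>j\<in>{2..n+1}. g j) > 0" using n g_pos[of 2] by (intro sum_pos2[where i=2]) auto
    then show ?thesis unfolding weight_bistar_0 by simp
  qed
  moreover have "?w 1 > g 0"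
  proof -
    have "(\<Sum>j\<in>{n+2..2*n+1}. g j) > 0" using n g_pos[of "n+2"] by (intro sum_pos2[where i="n+2"]) auto
    then show ?thesis unfolding weight_bistar_1 by simp
  qed
  ultimately show ?thesis
    using proper unfolding img proper_weights_bistar_iff[OF n] by simp
qed

section \<open>A labelling of the join\<close>

text \<open>F_n gets the labels 1..2n+1; in B_{n,n}, a and b get 2n+2 and 2n+3, the y_i get 2n+4..3n+3
and the x_i get 3n+4..4n+3. This makes every weight on the F_n side of the join exceed every
weight on the B_{n,n} side.\<close>

definition bistar_labelling :: "nat \<Rightarrow> nat \<Rightarrow> nat" where
  "bistar_labelling n j =
     (if j = 0 then 2*n+2 else if j = 1 then 2*n+3 else if j \<le> n+1 then 3*n+2+j else n+2+j)"

definition join_labelling :: "nat \<Rightarrow> nat + nat \<Rightarrow> nat" where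
  "join_labelling n = case_sum Suc (bistar_labelling n)"

lemma double_sum_Suc: "2 * (\<Sum>i=0..m. Suc i) = (m + 1) * (m + 2)"
  by (induction m) simp_all

lemma sum_Suc_friendship: "(\<Sum>i\<in>verts (friendship n). Suc i) = (2*n+1)*(n+1)"
  using double_sum_Suc[of "2*n"] by (simp add: verts_friendship)

lemma weight_friendship_Suc_centre: "weight (friendship n) Suc 0 = 2*n*n + 3*n"
proof -
  have "(\<Sum>i\<in>verts (friendship n). Suc i) = Suc 0 + weight (friendship n) Suc 0"
    by (simp add: verts_friendship weight_friendship_centre sum.atLeast_Suc_atMost)
  then show ?thesis
    using sum_Suc_friendship[of n] by (simp add: algebra_simps)
qed

lemma weight_friendship_Suc_bounds:
  assumes "n \<ge> 1" "q \<in> {1..2*n}"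
  shows "3 \<le> weight (friendship n) Suc q" "weight (friendship n) Suc q < weight (friendship n) Suc 0"
proof -
  have "weight (friendship n) Suc q = friendship_partner q + 2" "friendship_partner q \<in> {1..2*n}"
    using weight_friendship_leaf[OF assms(2)] friendship_partner_involution(1)[OF assms(2)] by simp_all
  moreover have "2*n + 2 < 2*n*n + 3*n"
    using assms(1) le_square[of n] unfolding mult.assoc by linarith
  ultimately show "3 \<le> weight (friendship n) Suc q" "weight (friendship n) Suc q < weight (friendship n) Suc 0"
    by (simp_all add: weight_friendship_Suc_centre)
qed

lemma proper_weights_friendship_Suc:
  assumes "n \<ge> 1"
  shows "proper_weights (friendship n) Suc"
  unfolding proper_weights_friendship_iff
proof
  fix q assume q: "q \<in> {1..2*n}"
  have "weight (friendship n) Suc q \<noteq> weight (friendship n) Suc (friendship_partner q)"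
    using friendship_partner_involution[OF q]
    by (simp add: weight_friendship_leaf[OF q] weight_friendship_leaf[OF friendship_partner_involution(1)[OF q]])
  then show "weight (friendship n) Suc 0 \<noteq> weight (friendship n) Suc q \<and>
      weight (friendship n) Suc q \<noteq> weight (friendship n) Suc (friendship_partner q)"
    using weight_friendship_Suc_bounds(2)[OF assms q] by simp
qed

lemma bij_betw_join_labelling:
  "bij_betw (join_labelling n) (verts (graph_join (friendship n) (bistar n)))
     {1..card (verts (graph_join (friendship n) (bistar n)))}"
proof -
  let ?V = "verts (graph_join (friendship n) (bistar n))"
  have card: "card ?V = 4*n+3"
    by (simp add: card_verts_graph_join verts_friendship verts_bistar)
  have V: "?V = Inl ` {0..2*n} \<union> Inr ` {0..2*n+1}"
    by (simp add: verts_graph_join verts_friendship verts_bistar)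
  have inj: "inj_on (join_labelling n) ?V"
    unfolding V by (rule inj_onI) (auto simp: join_labelling_def bistar_labelling_def split: if_splits)
  moreover have "join_labelling n ` ?V \<subseteq> {1..4*n+3}"
    unfolding V by (auto simp: join_labelling_def bistar_labelling_def)
  moreover have "card (join_labelling n ` ?V) = 4*n+3"
    unfolding card_image[OF inj] card ..
  ultimately show ?thesis
    unfolding bij_betw_def card by (simp add: card_subset_eq)
qed

lemma bistar_labelling_sum_bounds:
  "n*(3*n+4) \<le> (\<Sum>j\<in>{2..n+1}. bistar_labelling n j)"
  "n*(2*n+4) \<le> (\<Sum>j\<in>{n+2..2*n+1}. bistar_labelling n j)"
  "(\<Sum>j\<in>{n+2..2*n+1}. bistar_labelling n j) \<le> n*(3*n+3)"
proof -
  have "(\<Sum>j\<in>{2..n+1}. 3*n+4) \<le> (\<Sum>j\<in>{2..n+1}. bistar_labelling n j)"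
    by (rule sum_mono) (auto simp: bistar_labelling_def)
  then show "n*(3*n+4) \<le> (\<Sum>j\<in>{2..n+1}. bistar_labelling n j)" by simp
  have "(\<Sum>j\<in>{n+2..2*n+1}. 2*n+4) \<le> (\<Sum>j\<in>{n+2..2*n+1}. bistar_labelling n j)"
    by (rule sum_mono) (auto simp: bistar_labelling_def)
  then show "n*(2*n+4) \<le> (\<Sum>j\<in>{n+2..2*n+1}. bistar_labelling n j)" by simp
  have "(\<Sum>j\<in>{n+2..2*n+1}. bistar_labelling n j) \<le> (\<Sum>j\<in>{n+2..2*n+1}. 3*n+3)"
    by (rule sum_mono) (auto simp: bistar_labelling_def)
  then show "(\<Sum>j\<in>{n+2..2*n+1}. bistar_labelling n j) \<le> n*(3*n+3)" by simp
qed

lemma proper_weights_bistar_labelling: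
  assumes "n \<ge> 1"
  shows "proper_weights (bistar n) (bistar_labelling n)"
  unfolding proper_weights_bistar_iff[OF assms] weight_bistar_0 weight_bistar_1
  using bistar_labelling_sum_bounds[of n] assms
  by (simp add: bistar_labelling_def algebra_simps)

lemma sum_bistar_labelling:
  "(\<Sum>j\<in>verts (bistar n). bistar_labelling n j) =
     4*n + 5 + (\<Sum>j\<in>{2..n+1}. bistar_labelling n j) + (\<Sum>j\<in>{n+2..2*n+1}. bistar_labelling n j)"
proof -
  let ?l = "bistar_labelling n"
  have "{0..2*n+1} = insert 0 (insert 1 {2..(n+1)+n})" by auto
  then have "(\<Sum>j\<in>verts (bistar n). ?l j) = ?l 0 + ?l 1 + (\<Sum>j\<in>{2..(n+1)+n}. ?l j)"
    by (simp add: verts_bistar)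
  also have "(\<Sum>j\<in>{2..(n+1)+n}. ?l j) = (\<Sum>j\<in>{2..n+1}. ?l j) + (\<Sum>j\<in>{n+2..2*n+1}. ?l j)"
    by (subst sum.ub_add_nat) (simp_all add: mult_2)
  finally show ?thesis
    by (simp add: bistar_labelling_def)
qed

lemma bistar_labelling_centres: "bistar_labelling n 0 = 2*n+2" "bistar_labelling n 1 = 2*n+3"
  by (simp_all add: bistar_labelling_def)

lemma join_labelling_weights_separated:
  assumes n: "n \<ge> 1" and u: "u \<in> verts (friendship n)" and v: "v \<in> verts (bistar n)"
  shows "(\<Sum>i\<in>verts (friendship n). Suc i) + weight (bistar n) (bistar_labelling n) v <
    weight (friendship n) Suc u + (\<Sum>j\<in>verts (bistar n). bistar_labelling n j)"
proof -
  have "3 \<le> weight (friendship n) Suc u"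
    using u weight_friendship_Suc_bounds[OF n, of 1] weight_friendship_Suc_bounds(1)[OF n, of u] n
    by (cases "u = 0") (auto simp: verts_friendship)
  define SX where "SX = (\<Sum>j\<in>{2..n+1}. bistar_labelling n j)"
  define SY where "SY = (\<Sum>j\<in>{n+2..2*n+1}. bistar_labelling n j)"
  consider "v = 0" | "v = 1" | "v \<in> {2..n+1}" | "v \<in> {n+2..2*n+1}"
    using v by (force simp: verts_bistar)
  then have "weight (bistar n) (bistar_labelling n) v \<le> max (2*n+3 + SX) (2*n+2 + SY)"
  proof cases
    case 1
    then show ?thesis unfolding 1 weight_bistar_0 bistar_labelling_centres SX_def[symmetric] by simp
  next
    case 2
    then show ?thesis unfolding 2 weight_bistar_1 bistar_labelling_centres SY_def[symmetric] by simp
  next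
    case 3
    then show ?thesis unfolding weight_bistar_leaf_0[OF 3] bistar_labelling_centres by simp
  next
    case 4
    then show ?thesis unfolding weight_bistar_leaf_1[OF 4] bistar_labelling_centres by simp
  qed
  moreover have "n*(3*n+4) \<le> SX" "n*(2*n+4) \<le> SY"
    using bistar_labelling_sum_bounds unfolding SX_def SY_def by blast+
  ultimately show ?thesis
    unfolding sum_Suc_friendship sum_bistar_labelling SX_def[symmetric] SY_def[symmetric]
    by (simp add: algebra_simps)
qed

lemma ld_antimagic_join_labelling:
  assumes n: "n \<ge> 1"
  shows "ld_antimagic (graph_join (friendship n) (bistar n)) (join_labelling n)"
proof -
  have comp: "join_labelling n \<circ> Inl = Suc" "join_labelling n \<circ> Inr = bistar_labelling n"
    unfolding join_labelling_def by (fact case_sum_o_inj)+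
  have cross: "weight (graph_join (friendship n) (bistar n)) (join_labelling n) (Inl u) \<noteq>
      weight (graph_join (friendship n) (bistar n)) (join_labelling n) (Inr v)"
    if "u \<in> verts (friendship n)" "v \<in> verts (bistar n)" for u v
    using join_labelling_weights_separated[OF n that] that
    by (simp add: weight_graph_join_Inl weight_graph_join_Inr join_labelling_def case_sum_o_inj
        verts_friendship verts_bistar)
  show ?thesis
    unfolding ld_antimagic_iff proper_weights_graph_join_iff[OF finite_graph_friendship finite_graph_bistar] comp
    using bij_betw_join_labelling proper_weights_friendship_Suc[OF n] proper_weights_bistar_labelling[OF n] cross
    by (simp add: join_labelling_def)
qed

theorem mainTheorem4:
  fixes n :: nat
  assumes "n \<ge> 1"
  shows "chi_ld (graph_join (friendship n) (bistar n)) = 2*n + 5"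
proof (rule chi_ld_eqI[OF ld_antimagic_join_labelling[OF assms]])
  let ?J = "graph_join (friendship n) (bistar n)"
  note finite_graphs = finite_graph_friendship finite_graph_bistar
  fix f assume "ld_antimagic ?J f"
  then have bij: "bij_betw f (verts ?J) {1..card (verts ?J)}" and proper: "proper_weights ?J f"
    by (simp_all add: ld_antimagic_iff)
  have "inj_on (f \<circ> Inl) (verts (friendship n))" "inj_on (f \<circ> Inr) (verts (bistar n))"
    using bij_betw_imp_inj_on[OF bij] by (auto simp: verts_graph_join inj_on_def)
  moreover have "0 \<notin> (f \<circ> Inr) ` verts (bistar n)"
    using bij_betw_imp_surj_on[OF bij] by (force simp: verts_graph_join)
  moreover have "proper_weights (friendship n) (f \<circ> Inl)" "proper_weights (bistar n) (f \<circ> Inr)"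
    using proper by (simp_all add: proper_weights_graph_join_iff[OF finite_graphs])
  ultimately show "card (weight ?J f ` verts ?J) = 2*n + 5"
    using card_weight_image_graph_join[OF finite_graphs proper]
      card_weight_image_friendship card_weight_image_bistar[OF assms] by simp
qed

end
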